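(* Every symmetric group $(G,r)$ of finite multipermutation level $\mathrm{mpl}(G,r)=m$ is a solvable group whose derived (solvable) length is at most $m$.
   Context: A symmetric group is a pair $(G,r)$, $G$ a group, $r(u,v)=({}^uv,u^v)$ an involutive bijection of $G\times G$ with ${}^a1=1,{}^1u=u,1^u=1,a^1=a$, ${}^{ab}u={}^a({}^bu)$, $a^{uv}=(a^u)^v$, ${}^a(uv)=({}^au)({}^{a^u}v)$, $(ab)^u=(a^{{}^bu})(b^u)$, $uv=({}^uv)(u^v)$; it is a non-degenerate symmetric set (non-degenerate involutive solution of the Yang–Baxter equation). For a non-degenerate symmetric set $(X,r)$, the retraction $\mathrm{Ret}(X,r)$ is $X/\!\sim$, where $x\sim y$ iff ${}^xz={}^yz$ for all $z\in X$, with $r_{[X]}([x],[y])=([{}^xy],[x^y])$; $\mathrm{Ret}^m$ is its $m$-fold iterate and $\mathrm{mpl}(X,r)=m$ if $m$ is minimal with $\mathrm{Ret}^m(X,r)$ a one-element set. *)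

theory Defs
  imports "HOL-Algebra.Solvable_Groups"
begin

text \<open>A map r on G x G is written r(u,v) = (lact u v, ract u v), i.e.
  lact u v is the left action (u acting on v), ract u v is the right action (u acted on by v).\<close>

definition lact :: "('a \<times> 'a \<Rightarrow> 'a \<times> 'a) \<Rightarrow> 'a \<Rightarrow> 'a \<Rightarrow> 'a" where
  "lact r u v = fst (r (u, v))"

definition ract :: "('a \<times> 'a \<Rightarrow> 'a \<times> 'a) \<Rightarrow> 'a \<Rightarrow> 'a \<Rightarrow> 'a" where
  "ract r u v = snd (r (u, v))"

definition symmetric_group :: "('a, 'b) monoid_scheme \<Rightarrow> ('a \<times> 'a \<Rightarrow> 'a \<times> 'a) \<Rightarrow> bool" where
  "symmetric_group G r \<longleftrightarrow>
     group G \<and>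
     (\<forall>u\<in>carrier G. \<forall>v\<in>carrier G. r (u, v) \<in> carrier G \<times> carrier G) \<and>
     bij_betw r (carrier G \<times> carrier G) (carrier G \<times> carrier G) \<and>
     (\<forall>u\<in>carrier G. \<forall>v\<in>carrier G. r (r (u, v)) = (u, v)) \<and>
     (\<forall>a\<in>carrier G. lact r a \<one>\<^bsub>G\<^esub> = \<one>\<^bsub>G\<^esub>) \<and>
     (\<forall>u\<in>carrier G. lact r \<one>\<^bsub>G\<^esub> u = u) \<and>
     (\<forall>u\<in>carrier G. ract r \<one>\<^bsub>G\<^esub> u = \<one>\<^bsub>G\<^esub>) \<and>
     (\<forall>a\<in>carrier G. ract r a \<one>\<^bsub>G\<^esub> = a) \<and>
     (\<forall>a\<in>carrier G. \<forall>b\<in>carrier G. \<forall>u\<in>carrier G.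
        lact r (a \<otimes>\<^bsub>G\<^esub> b) u = lact r a (lact r b u)) \<and>
     (\<forall>a\<in>carrier G. \<forall>u\<in>carrier G. \<forall>v\<in>carrier G.
        ract r a (u \<otimes>\<^bsub>G\<^esub> v) = ract r (ract r a u) v) \<and>
     (\<forall>a\<in>carrier G. \<forall>u\<in>carrier G. \<forall>v\<in>carrier G.
        lact r a (u \<otimes>\<^bsub>G\<^esub> v) = lact r a u \<otimes>\<^bsub>G\<^esub> lact r (ract r a u) v) \<and>
     (\<forall>a\<in>carrier G. \<forall>b\<in>carrier G. \<forall>u\<in>carrier G.
        ract r (a \<otimes>\<^bsub>G\<^esub> b) u = ract r a (lact r b u) \<otimes>\<^bsub>G\<^esub> ract r b u) \<and>
     (\<forall>u\<in>carrier G. \<forall>v\<in>carrier G.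
        u \<otimes>\<^bsub>G\<^esub> v = lact r u v \<otimes>\<^bsub>G\<^esub> ract r u v)"

text \<open>Iterated retraction, encoded on the original carrier X:
  Ret^m(X,r) is (canonically) X modulo the equivalence ret_rel X r m, where
  ret_rel 0 is equality and x ~_(m+1) y iff (lact x z) ~_m (lact y z) for all z in X.
  (Indeed the classes of Ret^m are [x]_m and in Ret^m one has [x]_m acting on [z]_m as
  [lact x z]_m, so the retraction relation of Ret^m pulls back to ~_(m+1).)\<close>

fun ret_rel :: "'a set \<Rightarrow> ('a \<times> 'a \<Rightarrow> 'a \<times> 'a) \<Rightarrow> nat \<Rightarrow> 'a \<Rightarrow> 'a \<Rightarrow> bool" where
  "ret_rel X r 0 x y \<longleftrightarrow> x = y"
| "ret_rel X r (Suc m) x y \<longleftrightarrow> (\<forall>z\<in>X. ret_rel X r m (lact r x z) (lact r y z))"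

definition ret_one_point :: "'a set \<Rightarrow> ('a \<times> 'a \<Rightarrow> 'a \<times> 'a) \<Rightarrow> nat \<Rightarrow> bool" where
  "ret_one_point X r m \<longleftrightarrow> X \<noteq> {} \<and> (\<forall>x\<in>X. \<forall>y\<in>X. ret_rel X r m x y)"

definition mpl_eq :: "'a set \<Rightarrow> ('a \<times> 'a \<Rightarrow> 'a \<times> 'a) \<Rightarrow> nat \<Rightarrow> bool" where
  "mpl_eq X r m \<longleftrightarrow> ret_one_point X r m \<and> (\<forall>k<m. \<not> ret_one_point X r k)"

end

theory Submission
  imports Defs
begin

(* Write ^a u for lact r a u, u^v for ract r u v and x ~j y for ret_rel (carrier G) r j x y.
  Each ~j is a congruence of the group G, by induction on j: the symmetric-group axioms give
  ^a u = a u ^(u^-1)(a^-1), so if ~j respects multiplication then ^a preserves ~j, and this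
  is what makes ~(j+1) respect multiplication.  Hence the classes K j of 1 are subgroups.
  For x, y in K (j+1) we have ^x y ~j y and x^y = ^((^x y)^-1) x ~j ^(y^-1) x ~j x, so
  x y = (^x y)(x^y) ~j y x; thus [K (j+1), K (j+1)] lies in K j.  As mpl = m gives K m = G
  and K 0 = {1}, the m-th derived subgroup of G is trivial. *)

lemma ret_rel_refl: "ret_rel X r j x x"
  by (induction j arbitrary: x) auto

lemma ret_rel_sym: "ret_rel X r j x y \<Longrightarrow> ret_rel X r j y x"
  by (induction j arbitrary: x y) auto

lemma ret_rel_trans: "ret_rel X r j x y \<Longrightarrow> ret_rel X r j y z \<Longrightarrow> ret_rel X r j x z"
  by (induction j arbitrary: x y z) fastforce+

lemma ret_rel_Suc: "ret_rel X r j x y \<Longrightarrow> ret_rel X r (Suc j) x y"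
  by (induction j arbitrary: x y) (auto simp: ret_rel_refl)

lemma equivp_ret_rel: "equivp (ret_rel X r j)"
  by (rule equivpI) (blast intro: reflpI sympI transpI ret_rel_refl ret_rel_sym ret_rel_trans)+

definition mult_compatible :: "('a, 'b) monoid_scheme \<Rightarrow> ('a \<Rightarrow> 'a \<Rightarrow> bool) \<Rightarrow> bool" where
  "mult_compatible G R \<longleftrightarrow>
     (\<forall>x\<in>carrier G. \<forall>y\<in>carrier G. \<forall>x'\<in>carrier G. \<forall>y'\<in>carrier G.
        R x y \<longrightarrow> R x' y' \<longrightarrow> R (x \<otimes>\<^bsub>G\<^esub> x') (y \<otimes>\<^bsub>G\<^esub> y'))"

context group
begin

lemma mult_compatibleD:
  "mult_compatible G R \<Longrightarrow> R x y \<Longrightarrow> R x' y' \<Longrightarrow> x \<in> carrier G \<Longrightarrow> y \<in> carrier G \<Longrightarrow>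
    x' \<in> carrier G \<Longrightarrow> y' \<in> carrier G \<Longrightarrow> R (x \<otimes> x') (y \<otimes> y')"
  unfolding mult_compatible_def by blast

lemma mult_compatible_mult_left:
  assumes "equivp R" "mult_compatible G R" "R x y"
    and "a \<in> carrier G" "x \<in> carrier G" "y \<in> carrier G"
  shows "R (a \<otimes> x) (a \<otimes> y)"
  using mult_compatibleD[OF assms(2) equivp_reflp[OF assms(1)] assms(3)] assms(4-) by blast

lemma mult_compatible_mult_right:
  assumes "equivp R" "mult_compatible G R" "R x y"
    and "a \<in> carrier G" "x \<in> carrier G" "y \<in> carrier G"
  shows "R (x \<otimes> a) (y \<otimes> a)"
  using mult_compatibleD[OF assms(2) assms(3) equivp_reflp[OF assms(1)]] assms(4-) by blast

lemma mult_compatible_inv: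
  assumes R: "equivp R" "mult_compatible G R" and "R x y"
    and x: "x \<in> carrier G" and y: "y \<in> carrier G"
  shows "R (inv x) (inv y)"
proof -
  have step: "R (inv x \<otimes> x) (inv x \<otimes> y)"
    using x y by (intro mult_compatible_mult_left[OF R \<open>R x y\<close>]) auto
  have "R (inv x \<otimes> x \<otimes> inv y) (inv x \<otimes> y \<otimes> inv y)"
    using x y by (intro mult_compatible_mult_right[OF R step]) auto
  then have "R (inv y) (inv x)"
    using x y by (simp add: m_assoc)
  then show ?thesis
    by (rule equivp_symp[OF R(1)])
qed

lemma mult_compatible_kernel_subgroup:
  assumes R: "equivp R" "mult_compatible G R"
  shows "subgroup {x \<in> carrier G. R x \<one>} G"
proof (rule subgroupI)
  show "{x \<in> carrier G. R x \<one>} \<noteq> {}"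
    using equivp_reflp[OF R(1)] by auto
  show "inv a \<in> {x \<in> carrier G. R x \<one>}" if "a \<in> {x \<in> carrier G. R x \<one>}" for a
    using that mult_compatible_inv[OF R, of a \<one>] by auto
  show "a \<otimes> b \<in> {x \<in> carrier G. R x \<one>}"
    if "a \<in> {x \<in> carrier G. R x \<one>}" "b \<in> {x \<in> carrier G. R x \<one>}" for a b
    using that mult_compatibleD[OF R(2), of a \<one> b \<one>] by auto
qed auto

lemma mult_compatible_commutator:
  assumes R: "equivp R" "mult_compatible G R"
    and x: "x \<in> carrier G" and y: "y \<in> carrier G" and "R (x \<otimes> y) (y \<otimes> x)"
  shows "R (x \<otimes> y \<otimes> inv x \<otimes> inv y) \<one>"
proof -
  have step: "R (x \<otimes> y \<otimes> inv x) (y \<otimes> x \<otimes> inv x)"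
    using x y by (intro mult_compatible_mult_right[OF R \<open>R (x \<otimes> y) (y \<otimes> x)\<close>]) auto
  have "R (x \<otimes> y \<otimes> inv x \<otimes> inv y) (y \<otimes> x \<otimes> inv x \<otimes> inv y)"
    using x y by (intro mult_compatible_mult_right[OF R step]) auto
  then show ?thesis
    using x y by (simp add: m_assoc)
qed

end

locale symmetric_grp = group G for G (structure) + fixes r
  assumes symmetric_group: "symmetric_group G r"

lemma symmetric_grpI: "symmetric_group G r \<Longrightarrow> symmetric_grp G r"
  unfolding symmetric_grp_def symmetric_grp_axioms_def symmetric_group_def by blast

context symmetric_grp
begin

abbreviation act :: "'a \<Rightarrow> 'a \<Rightarrow> 'a" where "act \<equiv> lact r"
abbreviation ret :: "nat \<Rightarrow> 'a \<Rightarrow> 'a \<Rightarrow> bool" where "ret \<equiv> ret_rel (carrier G) r"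

lemma r_closed: "u \<in> carrier G \<Longrightarrow> v \<in> carrier G \<Longrightarrow> r (u, v) \<in> carrier G \<times> carrier G"
  using symmetric_group unfolding symmetric_group_def by (elim conjE) blast

lemma r_involutive: "u \<in> carrier G \<Longrightarrow> v \<in> carrier G \<Longrightarrow> r (r (u, v)) = (u, v)"
  using symmetric_group unfolding symmetric_group_def by (elim conjE) blast

lemma act_one [simp]: "u \<in> carrier G \<Longrightarrow> act \<one> u = u"
  using symmetric_group unfolding symmetric_group_def by (elim conjE) blast

lemma act_mult:
  "a \<in> carrier G \<Longrightarrow> b \<in> carrier G \<Longrightarrow> u \<in> carrier G \<Longrightarrow> act (a \<otimes> b) u = act a (act b u)"
  using symmetric_group unfolding symmetric_group_def by (elim conjE) blast

lemma mult_eq_act_ract: "u \<in> carrier G \<Longrightarrow> v \<in> carrier G \<Longrightarrow> u \<otimes> v = act u v \<otimes> ract r u v"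
  using symmetric_group unfolding symmetric_group_def by (elim conjE) (simp only: Ball_def)

lemma act_closed [simp]: "a \<in> carrier G \<Longrightarrow> u \<in> carrier G \<Longrightarrow> act a u \<in> carrier G"
  using r_closed unfolding lact_def by (metis mem_Times_iff)

lemma ract_closed [simp]: "a \<in> carrier G \<Longrightarrow> u \<in> carrier G \<Longrightarrow> ract r a u \<in> carrier G"
  using r_closed unfolding ract_def by (metis mem_Times_iff)

lemma act_inv_act [simp]: "a \<in> carrier G \<Longrightarrow> u \<in> carrier G \<Longrightarrow> act (inv a) (act a u) = u"
  by (metis act_mult act_one inv_closed l_inv)

lemma act_act_inv [simp]: "a \<in> carrier G \<Longrightarrow> u \<in> carrier G \<Longrightarrow> act a (act (inv a) u) = u"
  by (metis act_mult act_one inv_closed r_inv)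

lemma act_act_ract: "u \<in> carrier G \<Longrightarrow> v \<in> carrier G \<Longrightarrow> act (act u v) (ract r u v) = u"
  using r_involutive unfolding lact_def ract_def by (metis fst_conv prod.collapse)

lemma ract_eq_act: "u \<in> carrier G \<Longrightarrow> v \<in> carrier G \<Longrightarrow> ract r u v = act (inv (act u v)) u"
  by (metis act_act_ract act_inv_act act_closed ract_closed)

lemma act_eq_conj:
  assumes w: "w \<in> carrier G" and u: "u \<in> carrier G"
  shows "act w u = w \<otimes> u \<otimes> act (inv u) (inv w)"
proof -
  define v where "v = act (inv u) (inv w)"
  have v: "v \<in> carrier G" and act_u_v: "act u v = inv w"
    using w u by (simp_all add: v_def)
  have "act w u = ract r u v"
    using ract_eq_act[OF u v] w by (simp add: act_u_v)
  also have "\<dots> = w \<otimes> u \<otimes> v"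
    using mult_eq_act_ract[OF u v] w u v by (simp add: act_u_v inv_solve_left m_assoc)
  finally show ?thesis
    by (simp add: v_def)
qed

lemma ret_act_cong:
  assumes compat: "mult_compatible G (ret j)" and "ret j u v"
    and a: "a \<in> carrier G" and u: "u \<in> carrier G" and v: "v \<in> carrier G"
  shows "ret j (act a u) (act a v)"
proof -
  have "ret j (inv u) (inv v)"
    using u v by (intro mult_compatible_inv[OF equivp_ret_rel compat \<open>ret j u v\<close>])
  then have "ret (Suc j) (inv u) (inv v)"
    by (rule ret_rel_Suc)
  then have "ret j (act (inv u) (inv a)) (act (inv v) (inv a))"
    using a by simp
  moreover have "ret j (a \<otimes> u) (a \<otimes> v)"
    using a u v by (intro mult_compatible_mult_left[OF equivp_ret_rel compat \<open>ret j u v\<close>])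
  ultimately have "ret j (a \<otimes> u \<otimes> act (inv u) (inv a)) (a \<otimes> v \<otimes> act (inv v) (inv a))"
    using a u v mult_compatibleD[OF compat] by simp
  then show ?thesis
    by (simp only: act_eq_conj[OF a u] act_eq_conj[OF a v])
qed

lemma mult_compatible_ret_Suc:
  assumes compat: "mult_compatible G (ret j)"
  shows "mult_compatible G (ret (Suc j))"
  unfolding mult_compatible_def
proof (intro ballI impI)
  fix x y x' y'
  assume carrier: "x \<in> carrier G" "y \<in> carrier G" "x' \<in> carrier G" "y' \<in> carrier G"
    and "ret (Suc j) x y" "ret (Suc j) x' y'"
  have "ret j (act (x \<otimes> x') z) (act (y \<otimes> y') z)" if z: "z \<in> carrier G" for z
  proof -
    have "ret j (act x (act x' z)) (act y (act x' z))"
      using \<open>ret (Suc j) x y\<close> carrier z by simp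
    moreover have "ret j (act y (act x' z)) (act y (act y' z))"
      using \<open>ret (Suc j) x' y'\<close> carrier z by (intro ret_act_cong[OF compat]) auto
    ultimately have "ret j (act x (act x' z)) (act y (act y' z))"
      by (rule ret_rel_trans)
    then show ?thesis
      using carrier z by (simp add: act_mult)
  qed
  then show "ret (Suc j) (x \<otimes> x') (y \<otimes> y')"
    by simp
qed

lemma mult_compatible_ret: "mult_compatible G (ret j)"
proof (induction j)
  case 0
  show ?case
    by (simp add: mult_compatible_def)
next
  case (Suc j)
  then show ?case
    by (rule mult_compatible_ret_Suc)
qed

definition ret_kernel :: "nat \<Rightarrow> 'a set" where
  "ret_kernel j = {x \<in> carrier G. ret j x \<one>}"

lemma ret_commute:
  assumes "x \<in> ret_kernel (Suc j)" and "y \<in> ret_kernel (Suc j)"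
  shows "ret j (x \<otimes> y) (y \<otimes> x)"
proof -
  have x: "x \<in> carrier G" and y: "y \<in> carrier G"
    and x1: "ret (Suc j) x \<one>" and y1: "ret (Suc j) y \<one>"
    using assms unfolding ret_kernel_def by auto
  have act_x_y: "ret j (act x y) y"
    using x1 y by simp
  then have "ret j (inv (act x y)) (inv y)"
    using x y by (intro mult_compatible_inv[OF equivp_ret_rel mult_compatible_ret]) simp_all
  then have "ret (Suc j) (inv (act x y)) (inv y)"
    by (rule ret_rel_Suc)
  then have "ret j (ract r x y) (act (inv y) x)"
    using x y by (simp add: ract_eq_act)
  moreover have "ret j (act (inv y) x) x"
  proof -
    have "ret j (act y (act (inv y) x)) (act (inv y) x)"
      using y1 x y by (simp del: act_act_inv)
    then have "ret j x (act (inv y) x)"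
      using x y by simp
    then show ?thesis
      by (rule ret_rel_sym)
  qed
  ultimately have "ret j (ract r x y) x"
    by (rule ret_rel_trans)
  then have "ret j (act x y \<otimes> ract r x y) (y \<otimes> x)"
    using x y by (intro mult_compatibleD[OF mult_compatible_ret act_x_y]) simp_all
  then show ?thesis
    by (simp only: mult_eq_act_ract[OF x y])
qed

lemma ret_kernel_subgroup: "subgroup (ret_kernel j) G"
  unfolding ret_kernel_def
  by (rule mult_compatible_kernel_subgroup[OF equivp_ret_rel mult_compatible_ret])

lemma derived_ret_kernel_Suc: "derived G (ret_kernel (Suc j)) \<subseteq> ret_kernel j"
  unfolding derived_def
proof (rule generate_subgroup_incl[OF _ ret_kernel_subgroup], safe)
  fix x y
  assume x: "x \<in> ret_kernel (Suc j)" and y: "y \<in> ret_kernel (Suc j)"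
  have "x \<in> carrier G" "y \<in> carrier G"
    using x y by (simp_all add: ret_kernel_def)
  then show "x \<otimes> y \<otimes> inv x \<otimes> inv y \<in> ret_kernel j"
    using mult_compatible_commutator[OF equivp_ret_rel mult_compatible_ret _ _ ret_commute[OF x y]]
    by (simp add: ret_kernel_def)
qed

lemma derived_power_ret_kernel: "(derived G ^^ k) (ret_kernel (j + k)) \<subseteq> ret_kernel j"
proof (induction k arbitrary: j)
  case 0
  show ?case
    by simp
next
  case (Suc k)
  have "(derived G ^^ Suc k) (ret_kernel (j + Suc k)) \<subseteq> derived G (ret_kernel (Suc j))"
    using Suc.IH[of "Suc j"] by (simp add: mono_derived)
  also have "\<dots> \<subseteq> ret_kernel j"
    by (rule derived_ret_kernel_Suc)
  finally show ?case .
qed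

end

theorem mainTheorem7:
  fixes G :: "('a, 'b) monoid_scheme" and r :: "'a \<times> 'a \<Rightarrow> 'a \<times> 'a" and m :: nat
  assumes "symmetric_group G r"
    and "mpl_eq (carrier G) r m"
  shows "solvable G \<and> (derived G ^^ m) (carrier G) = {\<one>\<^bsub>G\<^esub>}"
proof -
  interpret symmetric_grp G r
    using assms(1) by (rule symmetric_grpI)
  have "ret_kernel m = carrier G"
    using assms(2) unfolding mpl_eq_def ret_one_point_def ret_kernel_def by auto
  then have "(derived G ^^ m) (carrier G) \<subseteq> ret_kernel 0"
    using derived_power_ret_kernel[of m 0] by simp
  also have "ret_kernel 0 = {\<one>\<^bsub>G\<^esub>}"
    by (auto simp: ret_kernel_def)
  finally have "(derived G ^^ m) (carrier G) = {\<one>\<^bsub>G\<^esub>}"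
    using subgroup.one_closed[OF exp_of_derived_is_subgroup[OF subgroup_self]] by blast
  then show ?thesis
    using solvable_iff_trivial_derived_seq by blast
qed

end
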